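(* For every message $M$ and formulas $\phi,\psi$: $\vdash[M]\big([M](\phi\vee\psi)\to([M]\phi\vee[M]\psi)\big)$.
   Context: Fix a finite set $\mathcal{A}$ of agent names containing a distinguished name $\mathsf{CM}$. Messages: $M ::= a \mid B \mid (M,M)$ ($a\in\mathcal{A}$, $B$ optional data constants, pairs). $\mathcal{P}$ is a denumerable set of propositional variables containing atoms $\mathsf{k}_a(M)$ ("$a$ knows $M$"). Formulas: $\phi ::= P \mid \phi\wedge\phi \mid \phi\vee\phi \mid \neg\phi \mid \phi\to\phi \mid [M]\phi$. Abbreviations: $\mathrm{true}:=\mathsf{k}_{\mathsf{CM}}(\mathsf{CM})$, $\mathrm{false}:=\neg\mathrm{true}$, $\phi\leftrightarrow\psi:=(\phi\to\psi)\wedge(\psi\to\phi)$, $\langle M\rangle\phi:=\neg\neg(\mathsf{k}_{\mathsf{CM}}(M)\wedge\phi)$. LIiP is the smallest set of formulas containing all instances of: the axioms of an adequate Hilbert axiomatization of intuitionistic propositional logic; $\mathsf{k}_a(a)$; $(\mathsf{k}_a(M)\wedge\mathsf{k}_a(M'))\leftrightarrow\mathsf{k}_a((M,M'))$; $[M]\mathsf{k}_{\mathsf{CM}}(M)$; $[M](\phi\to\psi)\to([M]\phi\to[M]\psi)$; $[M]\phi\to(\mathsf{k}_{\mathsf{CM}}(M)\to\phi)$; $[M]\phi\to\langle M\rangle\phi$; $\phi\to[M]\phi$; and closed under modus ponens and the rule: if $\mathsf{k}_{\mathsf{CM}}(M)\to\mathsf{k}_{\mathsf{CM}}(M')$ is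 in the set then so is $[M']\phi\to[M]\phi$ for every $\phi$. Write $\vdash\phi$ for $\phi\in\mathrm{LIiP}$. *)

theory Defs
  imports Main
begin

datatype ('a, 'b) msg = Ag 'a | Dat 'b | MPair "('a, 'b) msg" "('a, 'b) msg"

datatype ('a, 'b, 'c) pvar = Kn 'a "('a, 'b) msg" | PV 'c

datatype ('a, 'b, 'c) fm =
    Atom "('a, 'b, 'c) pvar"
  | Conj "('a, 'b, 'c) fm" "('a, 'b, 'c) fm"
  | Disj "('a, 'b, 'c) fm" "('a, 'b, 'c) fm"
  | Neg "('a, 'b, 'c) fm"
  | Imp "('a, 'b, 'c) fm" "('a, 'b, 'c) fm"
  | Box "('a, 'b) msg" "('a, 'b, 'c) fm"

abbreviation k :: "'a \<Rightarrow> ('a, 'b) msg \<Rightarrow> ('a, 'b, 'c) fm" where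
  "k a M \<equiv> Atom (Kn a M)"

definition Tru :: "'a \<Rightarrow> ('a, 'b, 'c) fm" where
  "Tru CM = k CM (Ag CM)"

definition Fls :: "'a \<Rightarrow> ('a, 'b, 'c) fm" where
  "Fls CM = Neg (Tru CM)"

definition Iff :: "('a, 'b, 'c) fm \<Rightarrow> ('a, 'b, 'c) fm \<Rightarrow> ('a, 'b, 'c) fm" where
  "Iff p q = Conj (Imp p q) (Imp q p)"

definition Dia :: "'a \<Rightarrow> ('a, 'b) msg \<Rightarrow> ('a, 'b, 'c) fm \<Rightarrow> ('a, 'b, 'c) fm" where
  "Dia CM M p = Neg (Neg (Conj (k CM M) p))"

(* LIiP, parametrised by the distinguished agent CM.
   Intuitionistic propositional part: Kleene's Hilbert system (negation primitive). *)
inductive LIiP :: "'a::finite \<Rightarrow> ('a, 'b, 'c) fm \<Rightarrow> bool" for CM :: "'a::finite" where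
  ax_K: "LIiP CM (Imp p (Imp q p))"
| ax_S: "LIiP CM (Imp (Imp p q) (Imp (Imp p (Imp q r)) (Imp p r)))"
| ax_conjI: "LIiP CM (Imp p (Imp q (Conj p q)))"
| ax_conjE1: "LIiP CM (Imp (Conj p q) p)"
| ax_conjE2: "LIiP CM (Imp (Conj p q) q)"
| ax_disjI1: "LIiP CM (Imp p (Disj p q))"
| ax_disjI2: "LIiP CM (Imp q (Disj p q))"
| ax_disjE: "LIiP CM (Imp (Imp p r) (Imp (Imp q r) (Imp (Disj p q) r)))"
| ax_negI: "LIiP CM (Imp (Imp p q) (Imp (Imp p (Neg q)) (Neg p)))"
| ax_negE: "LIiP CM (Imp (Neg p) (Imp p q))"
| ax_self: "LIiP CM (k a (Ag a))"
| ax_pair: "LIiP CM (Iff (Conj (k a M) (k a M')) (k a (MPair M M')))"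
| ax_knows: "LIiP CM (Box M (k CM M))"
| ax_boxK: "LIiP CM (Imp (Box M (Imp p q)) (Imp (Box M p) (Box M q)))"
| ax_boxT: "LIiP CM (Imp (Box M p) (Imp (k CM M) p))"
| ax_boxD: "LIiP CM (Imp (Box M p) (Dia CM M p))"
| ax_boxI: "LIiP CM (Imp p (Box M p))"
| mp: "LIiP CM (Imp p q) \<Longrightarrow> LIiP CM p \<Longrightarrow> LIiP CM q"
| mono: "LIiP CM (Imp (k CM M) (k CM M')) \<Longrightarrow> LIiP CM (Imp (Box M' p) (Box M p))"

end

theory Submission
  imports Defs
begin

text \<open>Under the hypothesis \<open>k\<^sub>C\<^sub>M(M)\<close> the axioms \<open>[M]\<chi> \<rightarrow> (k\<^sub>C\<^sub>M(M) \<rightarrow> \<chi>)\<close> and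
  \<open>\<chi> \<rightarrow> [M]\<chi>\<close> make \<open>[M]\<chi>\<close> equivalent to \<open>\<chi>\<close>, so the inner implication reduces to
  \<open>\<phi> \<or> \<psi> \<rightarrow> [M]\<phi> \<or> [M]\<psi>\<close>, which holds by \<open>\<chi> \<rightarrow> [M]\<chi>\<close> and disjunction elimination.
  The outer box is then discharged by K together with \<open>[M]k\<^sub>C\<^sub>M(M)\<close>: from
  \<open>k\<^sub>C\<^sub>M(M) \<rightarrow> \<chi>\<close> one gets \<open>[M](k\<^sub>C\<^sub>M(M) \<rightarrow> \<chi>)\<close>, hence \<open>[M]\<chi>\<close>.\<close>

inductive derivable_from :: "'a::finite \<Rightarrow> ('a, 'b, 'c) fm list \<Rightarrow> ('a, 'b, 'c) fm \<Rightarrow> bool"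
  for CM :: "'a::finite" where
  LIiP: "LIiP CM p \<Longrightarrow> derivable_from CM G p"
| hyp: "p \<in> set G \<Longrightarrow> derivable_from CM G p"
| mp: "derivable_from CM G (Imp p q) \<Longrightarrow> derivable_from CM G p \<Longrightarrow> derivable_from CM G q"

lemma LIiP_if_derivable_from_Nil: "derivable_from CM [] p \<Longrightarrow> LIiP CM p"
proof (induction "[] :: ('a, 'b, 'c) fm list" p rule: derivable_from.induct)
  case (mp p q)
  then show ?case by (blast intro: LIiP.mp)
qed simp_all

lemma LIiP_imp_refl: "LIiP CM (Imp p p)"
  using LIiP.mp[OF LIiP.mp[OF ax_S ax_K] ax_K[where q = "Imp p p"]] .

lemma derivable_from_Cons_imp:
  assumes "derivable_from CM (p # G) q"
  shows "derivable_from CM G (Imp p q)"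
  using assms
proof (induction "p # G" q rule: derivable_from.induct)
  case (LIiP q)
  then show ?case by (meson derivable_from.LIiP derivable_from.mp ax_K)
next
  case (hyp q)
  then consider "q = p" | "q \<in> set G" by auto
  then show ?case
    by cases (meson derivable_from.LIiP derivable_from.hyp derivable_from.mp ax_K LIiP_imp_refl)+
next
  case (mp q r)
  then show ?case by (meson derivable_from.LIiP derivable_from.mp ax_S)
qed

lemma derivable_from_disjE:
  assumes "derivable_from CM G (Disj p q)"
    and "derivable_from CM (p # G) r" and "derivable_from CM (q # G) r"
  shows "derivable_from CM G r"
  using assms by (meson derivable_from.LIiP derivable_from.mp ax_disjE derivable_from_Cons_imp)

lemma derivable_from_BoxI:
  "derivable_from CM G p \<Longrightarrow> derivable_from CM G (Box M p)"
  by (meson derivable_from.LIiP derivable_from.mp ax_boxI)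

lemma derivable_from_BoxE:
  "derivable_from CM G (Box M p) \<Longrightarrow> derivable_from CM G (k CM M) \<Longrightarrow> derivable_from CM G p"
  by (meson derivable_from.LIiP derivable_from.mp ax_boxT)

lemma derivable_from_Box_if_imp:
  assumes "derivable_from CM G (Imp (k CM M) p)"
  shows "derivable_from CM G (Box M p)"
proof -
  have "derivable_from CM G (Box M (Imp (k CM M) p))"
    using assms by (rule derivable_from_BoxI)
  then show ?thesis
    by (meson derivable_from.LIiP derivable_from.mp ax_boxK ax_knows)
qed

theorem theorem2p41:
  fixes CM :: "'a::finite" and M :: "('a, 'b) msg" and \<phi> \<psi> :: "('a, 'b, 'c) fm"
  shows "LIiP CM (Box M (Imp (Box M (Disj \<phi> \<psi>)) (Disj (Box M \<phi>) (Box M \<psi>))))"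
proof -
  let ?G = "[Box M (Disj \<phi> \<psi>), k CM M]"
  have "derivable_from CM ?G (Disj \<phi> \<psi>)"
    by (rule derivable_from_BoxE[where M = M]) (simp_all add: derivable_from.hyp)
  moreover have "derivable_from CM (\<phi> # ?G) (Disj (Box M \<phi>) (Box M \<psi>))"
    by (rule derivable_from.mp[OF derivable_from.LIiP[OF ax_disjI1] derivable_from_BoxI])
      (simp add: derivable_from.hyp)
  moreover have "derivable_from CM (\<psi> # ?G) (Disj (Box M \<phi>) (Box M \<psi>))"
    by (rule derivable_from.mp[OF derivable_from.LIiP[OF ax_disjI2] derivable_from_BoxI])
      (simp add: derivable_from.hyp)
  ultimately have "derivable_from CM ?G (Disj (Box M \<phi>) (Box M \<psi>))"
    by (rule derivable_from_disjE)
  then have "derivable_from CM [] (Box M (Imp (Box M (Disj \<phi> \<psi>)) (Disj (Box M \<phi>) (Box M \<psi>))))"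
    by (intro derivable_from_Box_if_imp derivable_from_Cons_imp)
  then show ?thesis
    by (rule LIiP_if_derivable_from_Nil)
qed

end
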